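(* There exists an absolute constant $c_0>0$ such that for every centered log-concave probability measure $\mu$ on $\mathbb{R}^n$ and every $t\geq 5n$, $$R_t(\mu)\supseteq c_0K_{n+1}(\mu).$$
   Context: A log-concave probability measure on $\mathbb{R}^n$ is a Borel probability measure with $\mu(\lambda A+(1-\lambda)B)\geq\mu(A)^\lambda\mu(B)^{1-\lambda}$ for compact $A,B$, $\lambda\in(0,1)$, and $\mu(H)<1$ for every hyperplane $H$; it has a log-concave density $f_\mu$. Centered means barycenter at $0$. $R_t(\mu)=\{x\in\mathbb{R}^n: f_\mu(x)\geq e^{-t}f_\mu(0)\}$. For $s>0$, $K_s(\mu)=\{x\in\mathbb{R}^n: \int_0^\infty r^{s-1}f_\mu(rx)\,dr\geq f_\mu(0)/s\}$ (Ball's body). *)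

theory Defs
  imports "HOL-Probability.Probability"
begin

text \<open>Points of R^n are represented as extensional functions in
  PiE {..<n} (\<lambda>_. UNIV) (coordinates 0..n-1), so that the dimension n is
  an ordinary variable and can be quantified inside the statement.\<close>

definition Rn :: "nat \<Rightarrow> (nat \<Rightarrow> real) set" where
  "Rn n = PiE {..<n} (\<lambda>_. UNIV)"

definition lebn :: "nat \<Rightarrow> (nat \<Rightarrow> real) measure" where
  "lebn n = PiM {..<n} (\<lambda>_. lborel)"

definition vzero :: "nat \<Rightarrow> nat \<Rightarrow> real" where
  "vzero n = (\<lambda>i\<in>{..<n}. 0)"

definition vscale :: "nat \<Rightarrow> real \<Rightarrow> (nat \<Rightarrow> real) \<Rightarrow> nat \<Rightarrow> real" where
  "vscale n r x = (\<lambda>i\<in>{..<n}. r * x i)"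

definition vcomb :: "nat \<Rightarrow> real \<Rightarrow> (nat \<Rightarrow> real) \<Rightarrow> real \<Rightarrow> (nat \<Rightarrow> real) \<Rightarrow> nat \<Rightarrow> real" where
  "vcomb n a x b y = (\<lambda>i\<in>{..<n}. a * x i + b * y i)"

definition hyperplane_n :: "nat \<Rightarrow> (nat \<Rightarrow> real) set \<Rightarrow> bool" where
  "hyperplane_n n H \<longleftrightarrow> (\<exists>u c. (\<exists>i<n. u i \<noteq> 0) \<and>
      H = {x \<in> Rn n. (\<Sum>i<n. u i * x i) = c})"

definition log_concave_measure :: "nat \<Rightarrow> (nat \<Rightarrow> real) measure \<Rightarrow> bool" where
  "log_concave_measure n M \<longleftrightarrow>
     sets M = sets (lebn n) \<and> prob_space M \<and>
     (\<forall>A B l. A \<subseteq> Rn n \<and> B \<subseteq> Rn n \<and> compact A \<and> compact B \<and> 0 < l \<and> l < 1 \<longrightarrow>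
        measure M {vcomb n l a (1 - l) b | a b. a \<in> A \<and> b \<in> B}
          \<ge> measure M A powr l * measure M B powr (1 - l)) \<and>
     (\<forall>H. hyperplane_n n H \<longrightarrow> measure M H < 1)"

definition centered :: "nat \<Rightarrow> (nat \<Rightarrow> real) measure \<Rightarrow> bool" where
  "centered n M \<longleftrightarrow> (\<forall>i<n. integrable M (\<lambda>x. x i) \<and> (\<integral>x. x i \<partial>M) = 0)"

definition log_concave_fun :: "nat \<Rightarrow> ((nat \<Rightarrow> real) \<Rightarrow> real) \<Rightarrow> bool" where
  "log_concave_fun n f \<longleftrightarrow> (\<forall>x\<in>Rn n. 0 \<le> f x) \<and>
     (\<forall>x\<in>Rn n. \<forall>y\<in>Rn n. \<forall>l. 0 < l \<and> l < 1 \<longrightarrow>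
        f (vcomb n l x (1 - l) y) \<ge> f x powr l * f y powr (1 - l))"

definition is_lc_density :: "nat \<Rightarrow> (nat \<Rightarrow> real) measure \<Rightarrow> ((nat \<Rightarrow> real) \<Rightarrow> real) \<Rightarrow> bool" where
  "is_lc_density n M f \<longleftrightarrow> f \<in> borel_measurable (lebn n) \<and> log_concave_fun n f \<and>
     M = density (lebn n) (\<lambda>x. ennreal (f x))"

definition Rt :: "nat \<Rightarrow> ((nat \<Rightarrow> real) \<Rightarrow> real) \<Rightarrow> real \<Rightarrow> (nat \<Rightarrow> real) set" where
  "Rt n f t = {x \<in> Rn n. f x \<ge> exp (- t) * f (vzero n)}"

definition Ks :: "nat \<Rightarrow> ((nat \<Rightarrow> real) \<Rightarrow> real) \<Rightarrow> real \<Rightarrow> (nat \<Rightarrow> real) set" where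
  "Ks n f s = {x \<in> Rn n.
     (\<integral>\<^sup>+ r. ennreal (indicator {0<..} r * r powr (s - 1) * f (vscale n r x)) \<partial>lborel)
       \<ge> ennreal (f (vzero n) / s)}"

end

(*
  The barycentre 0 lies in the interior of the support of f (otherwise the centred measure
  would charge a hyperplane), so the concave function ln f has a supergradient v at 0.
  Integrating ln f(z) <= ln f(0) + <v,z> against f, where the linear term has mean zero, and
  comparing with f(l z + (1-l) y) >= f(z)^l f(y)^(1-l) for l = n/(n+1), whose integral in z
  is l^-n, gives the Fradelizi-type bound f <= e^(4n) f(0).
  If now f(c x) < e^-t f(0) with c = e^-9 and t >= 5n, log-concavity along the ray through x
  gives f(r x) <= e^(9n) f(0) e^(-5nr/c) for all r > 0, hence
  int_0^oo r^n f(r x) dr <= e^(9n) f(0) n! (c/5n)^(n+1) < f(0)/(n+1), so x is not in K_(n+1).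
*)

theory Submission
  imports Defs
begin

section \<open>Coordinates and change of variables\<close>

lemma space_lebn [simp]: "space (lebn n) = Rn n"
  by (simp add: lebn_def Rn_def space_PiM)

lemma Rn_eqI: "x \<in> Rn n \<Longrightarrow> y \<in> Rn n \<Longrightarrow> (\<And>i. i < n \<Longrightarrow> x i = y i) \<Longrightarrow> x = y"
  unfolding Rn_def by (rule PiE_ext) auto

lemma vcomb_in_Rn [simp]: "vcomb n a x b y \<in> Rn n"
  by (simp add: vcomb_def Rn_def)

lemma vzero_in_Rn [simp]: "vzero n \<in> Rn n"
  by (simp add: vzero_def Rn_def)

lemma vscale_in_Rn [simp]: "vscale n r x \<in> Rn n"
  by (simp add: vscale_def Rn_def)

lemma restrict_in_Rn [simp]: "restrict z {..<n} \<in> Rn n"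
  by (simp add: Rn_def)

lemma nn_integral_lebn_Suc:
  assumes "g \<in> borel_measurable (lebn (Suc n))"
  shows "(\<integral>\<^sup>+z. g z \<partial>lebn (Suc n)) = (\<integral>\<^sup>+x. (\<integral>\<^sup>+y. g (x(n := y)) \<partial>lborel) \<partial>lebn n)"
proof -
  interpret product_sigma_finite "\<lambda>_::nat. lborel::real measure"
    by standard
  show ?thesis
    using assms unfolding lebn_def lessThan_Suc by (subst product_nn_integral_insert) auto
qed

lemma lebn_Suc_slice_measurable:
  assumes "g \<in> borel_measurable (lebn (Suc n))" "x \<in> Rn n"
  shows "(\<lambda>y. g (x(n := y))) \<in> borel_measurable borel"
proof -
  have "x \<in> space (PiM {..<n} (\<lambda>_. lborel))" "n \<notin> {..<n}"
    using assms(2) by (simp_all add: space_PiM Rn_def)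
  from measurable_comp[OF measurable_component_update[OF this] assms(1)[unfolded lebn_def lessThan_Suc]]
  show ?thesis
    unfolding comp_def measurable_lborel2 .
qed

lemma nn_integral_lebn_affine:
  fixes c :: real
  assumes c: "c > 0" and g: "g \<in> borel_measurable (lebn n)"
  shows "(\<integral>\<^sup>+z. g (\<lambda>i\<in>{..<n}. c * z i + d i) \<partial>lebn n) = ennreal (1 / c ^ n) * (\<integral>\<^sup>+z. g z \<partial>lebn n)"
  using g
proof (induction n arbitrary: g)
  case 0
  have "(\<lambda>i\<in>{..<0::nat}. c * z i + d i) = z" if "z \<in> space (lebn 0)" for z
    using that by (auto simp: lebn_def space_PiM)
  then have "(\<integral>\<^sup>+z. g (\<lambda>i\<in>{..<0::nat}. c * z i + d i) \<partial>lebn 0) = (\<integral>\<^sup>+z. g z \<partial>lebn 0)"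
    by (intro nn_integral_cong) (simp only:)
  then show ?case
    by (simp only: power_0 div_by_1 ennreal_1 mult_1)
next
  case (Suc n)
  define T where "T = (\<lambda>z::nat\<Rightarrow>real. \<lambda>i\<in>{..<n}. c * z i + d i)"
  define G where "G = (\<lambda>w. \<integral>\<^sup>+y. g (w(n := y)) \<partial>lborel)"
  have T_meas: "T \<in> measurable (lebn n) (lebn n)"
    unfolding T_def lebn_def by measurable
  have G_meas: "G \<in> borel_measurable (lebn n)"
    using Suc.prems unfolding G_def lebn_def lessThan_Suc by measurable
  have "(\<lambda>z. \<lambda>i\<in>{..<Suc n}. c * z i + d i) \<in> measurable (lebn (Suc n)) (lebn (Suc n))"
    unfolding lebn_def lessThan_Suc by measurable
  from measurable_comp[OF this Suc.prems]
  have gT_meas: "(\<lambda>z. g (\<lambda>i\<in>{..<Suc n}. c * z i + d i)) \<in> borel_measurable (lebn (Suc n))"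
    unfolding comp_def .
  have split: "(\<lambda>i\<in>{..<Suc n}. c * (x(n := y)) i + d i) = (T x)(n := d n + c * y)"
    if "x \<in> Rn n" for x y
    using that by (auto simp: T_def fun_eq_iff Rn_def)
  have inner: "(\<integral>\<^sup>+y. g ((T x)(n := d n + c * y)) \<partial>lborel) = ennreal (1 / c) * G (T x)" for x
  proof -
    have "T x \<in> Rn n"
      by (simp add: T_def Rn_def)
    from nn_integral_real_affine[OF lebn_Suc_slice_measurable[OF Suc.prems this], of c "d n"] c
    have "G (T x) = ennreal c * (\<integral>\<^sup>+y. g ((T x)(n := d n + c * y)) \<partial>lborel)"
      unfolding G_def by (simp only: abs_of_pos)
    then show ?thesis
      using c by (simp add: ennreal_mult'[symmetric] mult.assoc[symmetric])
  qed
  have "(\<integral>\<^sup>+z. g (\<lambda>i\<in>{..<Suc n}. c * z i + d i) \<partial>lebn (Suc n))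
      = (\<integral>\<^sup>+x. (\<integral>\<^sup>+y. g (\<lambda>i\<in>{..<Suc n}. c * (x(n := y)) i + d i) \<partial>lborel) \<partial>lebn n)"
    using gT_meas by (rule nn_integral_lebn_Suc)
  also have "\<dots> = (\<integral>\<^sup>+x. ennreal (1 / c) * G (T x) \<partial>lebn n)"
    by (intro nn_integral_cong) (simp only: space_lebn split inner)
  also have "\<dots> = ennreal (1 / c) * (\<integral>\<^sup>+x. G (T x) \<partial>lebn n)"
    using measurable_comp[OF T_meas G_meas] by (simp add: comp_def nn_integral_cmult)
  also have "(\<integral>\<^sup>+x. G (T x) \<partial>lebn n) = ennreal (1 / c ^ n) * (\<integral>\<^sup>+z. G z \<partial>lebn n)"
    unfolding T_def by (rule Suc.IH[OF G_meas])
  also have "(\<integral>\<^sup>+z. G z \<partial>lebn n) = (\<integral>\<^sup>+z. g z \<partial>lebn (Suc n))"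
    unfolding G_def using Suc.prems by (rule nn_integral_lebn_Suc[symmetric])
  finally show ?case
    using c by (simp add: ennreal_mult'[symmetric] mult.assoc[symmetric])
qed

section \<open>Convex sets around the origin\<close>

definition axis_vec :: "nat \<Rightarrow> nat \<Rightarrow> real \<Rightarrow> nat \<Rightarrow> real" where
  "axis_vec n k s = (\<lambda>i\<in>{..<n}. if i = k then s else 0)"

definition convex_Rn :: "nat \<Rightarrow> (nat \<Rightarrow> real) set \<Rightarrow> bool" where
  "convex_Rn n C \<longleftrightarrow> (\<forall>a\<in>C. \<forall>b\<in>C. \<forall>l. 0 < l \<and> l < 1 \<longrightarrow> vcomb n l a (1 - l) b \<in> C)"

text \<open>For a convex set containing 0 this says that 0 is an interior point.\<close>

definition two_sided_axes :: "nat \<Rightarrow> (nat \<Rightarrow> real) set \<Rightarrow> bool" where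
  "two_sided_axes n C \<longleftrightarrow>
     (\<forall>k<n. (\<exists>s>0. axis_vec n k s \<in> C) \<and> (\<exists>s>0. axis_vec n k (- s) \<in> C))"

lemma axis_vec_in_Rn [simp]: "axis_vec n k s \<in> Rn n"
  by (simp add: axis_vec_def Rn_def)

lemma hypograph_slopes_ordered:
  fixes E :: "((nat \<Rightarrow> real) \<times> real) set"
  assumes convex: "\<And>a t b s l. (a, t) \<in> E \<Longrightarrow> (b, s) \<in> E \<Longrightarrow> 0 < l \<Longrightarrow> l < 1 \<Longrightarrow>
      (vcomb n l a (1 - l) b, l * t + (1 - l) * s) \<in> E"
    and below: "\<And>w t. (w, t) \<in> E \<Longrightarrow> \<forall>i. k \<le> i \<and> i < n \<longrightarrow> w i = 0 \<Longrightarrow>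
      t \<le> (\<Sum>i<k. v i * w i)"
    and k: "k < n"
    and a: "(a, t1) \<in> E" "\<forall>i. k < i \<and> i < n \<longrightarrow> a i = 0" "a k > 0"
    and b: "(b, t2) \<in> E" "\<forall>i. k < i \<and> i < n \<longrightarrow> b i = 0" "b k < 0"
  shows "(t1 - (\<Sum>i<k. v i * a i)) / a k \<le> ((\<Sum>i<k. v i * b i) - t2) / (- b k)"
proof -
  define La where "La = (\<Sum>i<k. v i * a i)"
  define Lb where "Lb = (\<Sum>i<k. v i * b i)"
  define l where "l = - b k / (a k - b k)"
  have l: "0 < l" "l < 1"
    using a b by (auto simp: l_def field_simps)
  define m where "m = vcomb n l a (1 - l) b"
  have "l * a k + (1 - l) * b k = 0"
    using a b by (simp add: l_def field_simps)
  then have "\<forall>i. k \<le> i \<and> i < n \<longrightarrow> m i = 0"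
    using a(2) b(2) by (auto simp: m_def vcomb_def le_less)
  then have "l * t1 + (1 - l) * t2 \<le> (\<Sum>i<k. v i * m i)"
    using below convex[OF a(1) b(1) l] unfolding m_def by blast
  also have "(\<Sum>i<k. v i * m i) = l * La + (1 - l) * Lb"
    using k by (simp add: La_def Lb_def m_def vcomb_def sum_distrib_left sum.distrib[symmetric] algebra_simps)
  finally have "l * (t1 - La) \<le> (1 - l) * (Lb - t2)"
    by (simp add: algebra_simps)
  then have "(a k - b k) * (l * (t1 - La)) \<le> (a k - b k) * ((1 - l) * (Lb - t2))"
    using a b by (intro mult_left_mono) auto
  moreover have "(a k - b k) * l = - b k" "(a k - b k) * (1 - l) = a k"
    using a b by (auto simp: l_def field_simps)
  ultimately have "- b k * (t1 - La) \<le> a k * (Lb - t2)"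
    by (metis mult.assoc)
  then show ?thesis
    using a b by (simp add: La_def Lb_def field_simps mult.commute)
qed

text \<open>Hahn--Banach one coordinate at a time: the new coefficient is the supremum of the
  slopes of \<open>E\<close> towards the positive \<open>k\<close>-axis, which by \<open>hypograph_slopes_ordered\<close>
  lies below every slope towards the negative \<open>k\<close>-axis.\<close>

lemma hypograph_majorant_step:
  fixes E :: "((nat \<Rightarrow> real) \<times> real) set"
  assumes convex: "\<And>a t b s l. (a, t) \<in> E \<Longrightarrow> (b, s) \<in> E \<Longrightarrow> 0 < l \<Longrightarrow> l < 1 \<Longrightarrow>
      (vcomb n l a (1 - l) b, l * t + (1 - l) * s) \<in> E"
    and below: "\<And>w t. (w, t) \<in> E \<Longrightarrow> \<forall>i. k \<le> i \<and> i < n \<longrightarrow> w i = 0 \<Longrightarrow>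
      t \<le> (\<Sum>i<k. v i * w i)"
    and k: "k < n"
    and axes: "two_sided_axes n (fst ` E)"
  shows "\<exists>v'. \<forall>w t. (w, t) \<in> E \<longrightarrow> (\<forall>i. Suc k \<le> i \<and> i < n \<longrightarrow> w i = 0) \<longrightarrow>
      t \<le> (\<Sum>i<Suc k. v' i * w i)"
proof -
  let ?L = "\<lambda>w. \<Sum>i<k. v i * w i"
  let ?vanish = "\<lambda>w. \<forall>i. k < i \<and> i < n \<longrightarrow> w i = 0"
  define A where "A = {(t - ?L a) / a k | a t. (a, t) \<in> E \<and> ?vanish a \<and> a k > 0}"
  have A_le: "\<alpha> \<le> (?L b - t) / (- b k)"
    if "\<alpha> \<in> A" "(b, t) \<in> E" "?vanish b" "b k < 0" for \<alpha> b t
    using that hypograph_slopes_ordered[OF convex below k] unfolding A_def by blast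
  obtain s t where "(axis_vec n k s, t) \<in> E" "s > 0"
    using axes k unfolding two_sided_axes_def by force
  then have "(t - ?L (axis_vec n k s)) / s \<in> A"
    unfolding A_def using k
    by (intro CollectI exI[of _ "axis_vec n k s"] exI[of _ t]) (auto simp: axis_vec_def)
  then have A_ne: "A \<noteq> {}"
    by blast
  obtain s' t' where neg: "(axis_vec n k (- s'), t') \<in> E" "s' > 0"
    using axes k unfolding two_sided_axes_def by force
  then have A_bdd: "bdd_above A"
    using A_le[OF _ neg(1)] k by (intro bdd_aboveI) (auto simp: axis_vec_def)
  define v' where "v' = v(k := Sup A)"
  show ?thesis
  proof (intro exI allI impI)
    fix w t assume wt: "(w, t) \<in> E" and vanish: "\<forall>i. Suc k \<le> i \<and> i < n \<longrightarrow> w i = 0"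
    have sum: "(\<Sum>i<Suc k. v' i * w i) = ?L w + Sup A * w k"
      by (simp add: v'_def)
    consider "w k > 0" | "w k < 0" | "w k = 0" by linarith
    then show "t \<le> (\<Sum>i<Suc k. v' i * w i)"
    proof cases
      case 1
      then have "(t - ?L w) / w k \<in> A"
        unfolding A_def using wt vanish
        by (intro CollectI exI[of _ w] exI[of _ t]) (simp add: Suc_le_eq)
      then have "(t - ?L w) / w k \<le> Sup A"
        using A_bdd by (rule cSup_upper)
      then show ?thesis unfolding sum using 1 by (simp add: field_simps)
    next
      case 2
      then have "Sup A \<le> (?L w - t) / (- w k)"
        using wt vanish A_ne A_le by (intro cSup_least) auto
      then show ?thesis unfolding sum using 2 by (simp add: field_simps)
    next
      case 3
      then have "\<forall>i. k \<le> i \<and> i < n \<longrightarrow> w i = 0"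
        using vanish by (metis Suc_leI le_neq_implies_less)
      then show ?thesis unfolding sum using below[OF wt] 3 by simp
    qed
  qed
qed

lemma hypograph_linear_majorant:
  fixes E :: "((nat \<Rightarrow> real) \<times> real) set"
  assumes E_Rn: "fst ` E \<subseteq> Rn n"
    and convex: "\<And>a t b s l. (a, t) \<in> E \<Longrightarrow> (b, s) \<in> E \<Longrightarrow> 0 < l \<Longrightarrow> l < 1 \<Longrightarrow>
      (vcomb n l a (1 - l) b, l * t + (1 - l) * s) \<in> E"
    and at_zero: "\<And>t. (vzero n, t) \<in> E \<Longrightarrow> t \<le> 0"
    and axes: "two_sided_axes n (fst ` E)"
  shows "\<exists>v. \<forall>(w, t) \<in> E. t \<le> (\<Sum>i<n. v i * w i)"
proof -
  have "\<exists>v. \<forall>w t. (w, t) \<in> E \<longrightarrow> (\<forall>i. k \<le> i \<and> i < n \<longrightarrow> w i = 0) \<longrightarrow>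
      t \<le> (\<Sum>i<k. v i * w i)" if "k \<le> n" for k
    using that
  proof (induction k)
    case 0
    have "w = vzero n" if "(w, t) \<in> E" "\<forall>i<n. w i = 0" for w t
      using that E_Rn by (intro Rn_eqI) (force simp: vzero_def)+
    then show ?case
      using at_zero by auto
  next
    case (Suc k)
    then obtain v where "\<And>w t. (w, t) \<in> E \<Longrightarrow> \<forall>i. k \<le> i \<and> i < n \<longrightarrow> w i = 0 \<Longrightarrow>
        t \<le> (\<Sum>i<k. v i * w i)"
      by auto
    from hypograph_majorant_step[OF convex this _ axes] Suc.prems show ?case
      by simp
  qed
  from this[of n] show ?thesis
    by auto
qed

lemma convex_Rn_restrict:
  assumes "convex_Rn n C" "m \<le> n"
  shows "convex_Rn m ((\<lambda>z. restrict z {..<m}) ` C)"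
  unfolding convex_Rn_def
proof (intro ballI allI impI)
  fix a b and l :: real
  assume "a \<in> (\<lambda>z. restrict z {..<m}) ` C" "b \<in> (\<lambda>z. restrict z {..<m}) ` C" "0 < l \<and> l < 1"
  then obtain za zb where "za \<in> C" "zb \<in> C" "a = restrict za {..<m}" "b = restrict zb {..<m}"
    and "vcomb n l za (1 - l) zb \<in> C"
    using assms(1) unfolding convex_Rn_def by blast
  moreover have "vcomb m l a (1 - l) b = restrict (vcomb n l za (1 - l) zb) {..<m}"
    using assms(2) \<open>a = _\<close> \<open>b = _\<close> by (auto simp: vcomb_def fun_eq_iff)
  ultimately show "vcomb m l a (1 - l) b \<in> (\<lambda>z. restrict z {..<m}) ` C"
    by blast
qed

lemma convex_comb_eq_0_if_opposite_signs:
  fixes r y :: real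
  assumes "r * y < 0"
  obtains \<alpha> where "0 < \<alpha>" "\<alpha> < 1" "\<alpha> * y + (1 - \<alpha>) * r = 0"
proof
  have "0 < r / (r - y) \<and> r / (r - y) < 1"
    using assms by (cases "r > 0") (auto simp: mult_less_0_iff divide_less_eq zero_less_divide_iff)
  then show "0 < r / (r - y)" "r / (r - y) < 1"
    by auto
  have "r - y \<noteq> 0"
    using assms by (auto simp: mult_less_0_iff)
  then show "r / (r - y) * y + (1 - r / (r - y)) * r = 0"
    by (simp add: field_simps)
qed

lemma axis_vec_lift:
  assumes convex: "convex_Rn (Suc n) C" and C_Rn: "C \<subseteq> Rn (Suc n)" and k: "k < n"
    and proj: "axis_vec n k s \<in> (\<lambda>z. restrict z {..<n}) ` C"
    and pos: "axis_vec (Suc n) n p \<in> C" "p > 0"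
    and neg: "axis_vec (Suc n) n (- q) \<in> C" "q > 0"
  shows "\<exists>\<alpha>>0. axis_vec (Suc n) k (\<alpha> * s) \<in> C"
proof -
  obtain z where z: "z \<in> C" "restrict z {..<n} = axis_vec n k s"
    using proj by force
  have z_Rn: "z \<in> Rn (Suc n)"
    using z C_Rn by auto
  have z_below: "z i = (if i = k then s else 0)" if "i < n" for i
    using fun_cong[OF z(2), of i] that by (simp add: axis_vec_def)
  show ?thesis
  proof (cases "z n = 0")
    case True
    then have "z = axis_vec (Suc n) k (1 * s)"
      using k by (intro Rn_eqI[OF z_Rn]) (auto simp: axis_vec_def z_below less_Suc_eq)
    then show ?thesis
      using z(1) by (intro exI[of _ 1]) auto
  next
    case False
    obtain r where r: "axis_vec (Suc n) n r \<in> C" "r * z n < 0"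
    proof (cases "z n > 0")
      case True
      then show ?thesis using that[OF neg(1)] neg(2) by (simp add: mult_neg_pos)
    next
      case False
      then show ?thesis using that[OF pos(1)] pos(2) \<open>z n \<noteq> 0\<close> by (simp add: mult_pos_neg)
    qed
    obtain \<alpha> where \<alpha>: "0 < \<alpha>" "\<alpha> < 1" "\<alpha> * z n + (1 - \<alpha>) * r = 0"
      using convex_comb_eq_0_if_opposite_signs[OF r(2)] .
    have "vcomb (Suc n) \<alpha> z (1 - \<alpha>) (axis_vec (Suc n) n r) = axis_vec (Suc n) k (\<alpha> * s)"
      using k \<alpha>(3) by (intro Rn_eqI[OF vcomb_in_Rn axis_vec_in_Rn])
        (auto simp: vcomb_def axis_vec_def z_below less_Suc_eq)
    moreover have "vcomb (Suc n) \<alpha> z (1 - \<alpha>) (axis_vec (Suc n) n r) \<in> C"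
      using convex z(1) r(1) \<alpha>(1,2) unfolding convex_Rn_def by blast
    ultimately show ?thesis
      using \<alpha>(1) by auto
  qed
qed

lemma axis_vec_last_if_restrict_zero:
  assumes "z \<in> Rn (Suc n)" "restrict z {..<n} = vzero n"
  shows "z = axis_vec (Suc n) n (z n)"
proof (rule Rn_eqI[OF assms(1) axis_vec_in_Rn])
  fix i assume "i < Suc n"
  then show "z i = axis_vec (Suc n) n (z n) i"
    using fun_cong[OF assms(2), of i] by (auto simp: axis_vec_def vzero_def less_Suc_eq)
qed

lemma halfspace_if_axis_ray_missing:
  assumes convex: "convex_Rn (Suc n) C" and C_Rn: "C \<subseteq> Rn (Suc n)"
    and axes: "two_sided_axes n ((\<lambda>z. restrict z {..<n}) ` C)"
    and \<sigma>: "\<sigma> = 1 \<or> \<sigma> = -1" and missing: "\<And>s. s > 0 \<Longrightarrow> axis_vec (Suc n) n (\<sigma> * s) \<notin> C"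
  shows "\<exists>v. (\<exists>i<Suc n. v i \<noteq> 0) \<and> (\<forall>z\<in>C. 0 \<le> (\<Sum>i<Suc n. v i * z i))"
proof -
  define E where "E = (\<lambda>z. (restrict z {..<n}, \<sigma> * z n)) ` C"
  have "\<exists>v. \<forall>(w, t) \<in> E. t \<le> (\<Sum>i<n. v i * w i)"
  proof (rule hypograph_linear_majorant)
    show "fst ` E \<subseteq> Rn n"
      by (auto simp: E_def)
  next
    fix a t b s and l :: real
    assume "(a, t) \<in> E" "(b, s) \<in> E" "0 < l" "l < 1"
    then obtain za zb where "za \<in> C" "zb \<in> C" and ab: "a = restrict za {..<n}" "b = restrict zb {..<n}"
      and ts: "t = \<sigma> * za n" "s = \<sigma> * zb n" and "vcomb (Suc n) l za (1 - l) zb \<in> C"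
      using convex unfolding E_def convex_Rn_def by blast
    moreover have "vcomb n l a (1 - l) b = restrict (vcomb (Suc n) l za (1 - l) zb) {..<n}"
      by (auto simp: ab vcomb_def fun_eq_iff)
    moreover have "l * t + (1 - l) * s = \<sigma> * vcomb (Suc n) l za (1 - l) zb n"
      by (simp add: ts vcomb_def algebra_simps)
    ultimately show "(vcomb n l a (1 - l) b, l * t + (1 - l) * s) \<in> E"
      unfolding E_def by blast
  next
    fix t assume "(vzero n, t) \<in> E"
    then obtain z where z: "z \<in> C" "restrict z {..<n} = vzero n" "t = \<sigma> * z n"
      by (auto simp: E_def)
    then have "z = axis_vec (Suc n) n (\<sigma> * t)"
      using axis_vec_last_if_restrict_zero[of z n] C_Rn \<sigma> by auto
    then show "t \<le> 0"
      using missing[of t] z(1) by fastforce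
  next
    show "two_sided_axes n (fst ` E)"
      using axes by (simp add: E_def image_image)
  qed
  then obtain v where v: "\<And>w t. (w, t) \<in> E \<Longrightarrow> t \<le> (\<Sum>i<n. v i * w i)"
    by blast
  show ?thesis
  proof (intro exI[of _ "v(n := - \<sigma>)"] conjI ballI)
    show "\<exists>i<Suc n. (v(n := - \<sigma>)) i \<noteq> 0"
      using \<sigma> by (intro exI[of _ n]) auto
  next
    fix z assume "z \<in> C"
    then have "\<sigma> * z n \<le> (\<Sum>i<n. v i * z i)"
      using v[of "restrict z {..<n}"] by (auto simp: E_def)
    then show "0 \<le> (\<Sum>i<Suc n. (v(n := - \<sigma>)) i * z i)"
      by simp
  qed
qed

lemma two_sided_axes_Suc:
  assumes convex: "convex_Rn (Suc n) C" and C_Rn: "C \<subseteq> Rn (Suc n)"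
    and axes: "two_sided_axes n ((\<lambda>z. restrict z {..<n}) ` C)"
    and pos: "axis_vec (Suc n) n p \<in> C" "p > 0"
    and neg: "axis_vec (Suc n) n (- q) \<in> C" "q > 0"
  shows "two_sided_axes (Suc n) C"
  unfolding two_sided_axes_def
proof (intro allI impI)
  fix k assume "k < Suc n"
  show "(\<exists>s>0. axis_vec (Suc n) k s \<in> C) \<and> (\<exists>s>0. axis_vec (Suc n) k (- s) \<in> C)"
  proof (cases "k = n")
    case False
    then have k: "k < n"
      using \<open>k < Suc n\<close> by simp
    then obtain s s' where "s > 0" "s' > 0"
      "axis_vec n k s \<in> (\<lambda>z. restrict z {..<n}) ` C" "axis_vec n k (- s') \<in> (\<lambda>z. restrict z {..<n}) ` C"
      using axes unfolding two_sided_axes_def by blast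
    with axis_vec_lift[OF convex C_Rn k _ pos neg] show ?thesis
      by (metis mult_minus_right mult_pos_pos)
  qed (use pos neg in blast)
qed

lemma convex_Rn_halfspace_or_two_sided_axes:
  assumes "C \<subseteq> Rn n" "convex_Rn n C" "vzero n \<in> C"
  shows "(\<exists>v. (\<exists>i<n. v i \<noteq> 0) \<and> (\<forall>z\<in>C. 0 \<le> (\<Sum>i<n. v i * z i))) \<or> two_sided_axes n C"
  using assms
proof (induction n arbitrary: C)
  case 0
  then show ?case
    by (simp add: two_sided_axes_def)
next
  case (Suc n)
  define C' where "C' = (\<lambda>z. restrict z {..<n}) ` C"
  have "vzero n = restrict (vzero (Suc n)) {..<n}"
    by (auto simp: vzero_def fun_eq_iff)
  then have "C' \<subseteq> Rn n" "convex_Rn n C'" "vzero n \<in> C'"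
    using Suc.prems convex_Rn_restrict[of "Suc n" C n] by (auto simp: C'_def)
  from Suc.IH[OF this] consider
      (halfspace) v where "\<exists>i<n. v i \<noteq> 0" "\<And>z. z \<in> C' \<Longrightarrow> 0 \<le> (\<Sum>i<n. v i * z i)"
    | (axes) "two_sided_axes n C'"
    by blast
  then show ?case
  proof cases
    case halfspace
    have "0 \<le> (\<Sum>i<Suc n. (v(n := 0)) i * z i)" if "z \<in> C" for z
      using halfspace(2)[of "restrict z {..<n}"] that by (simp add: C'_def)
    moreover have "\<exists>i<Suc n. (v(n := 0)) i \<noteq> 0"
      using halfspace(1) by auto
    ultimately show ?thesis
      by blast
  next
    case axes
    show ?thesis
    proof (cases "(\<exists>p>0. axis_vec (Suc n) n p \<in> C) \<and> (\<exists>q>0. axis_vec (Suc n) n (- q) \<in> C)")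
      case True
      then show ?thesis
        using two_sided_axes_Suc[OF Suc.prems(2,1) axes[unfolded C'_def]] by blast
    next
      case False
      then obtain \<sigma> :: real where "\<sigma> = 1 \<or> \<sigma> = -1" "\<And>s. s > 0 \<Longrightarrow> axis_vec (Suc n) n (\<sigma> * s) \<notin> C"
        by (metis mult_1 mult_minus1)
      from halfspace_if_axis_ray_missing[OF Suc.prems(2,1) axes[unfolded C'_def] this] show ?thesis
        by blast
    qed
  qed
qed

section \<open>A supergradient of the logarithm of the density\<close>

lemma log_concave_funD:
  assumes "log_concave_fun n f" "x \<in> Rn n" "y \<in> Rn n" "0 < l" "l < 1"
  shows "f x powr l * f y powr (1 - l) \<le> f (vcomb n l x (1 - l) y)"
  using assms unfolding log_concave_fun_def by blast

lemma log_concave_fun_nonneg: "log_concave_fun n f \<Longrightarrow> x \<in> Rn n \<Longrightarrow> 0 \<le> f x"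
  unfolding log_concave_fun_def by blast

lemma is_lc_densityD:
  assumes "is_lc_density n M f"
  shows "f \<in> borel_measurable (lebn n)" "log_concave_fun n f"
    "M = density (lebn n) (\<lambda>x. ennreal (f x))"
  using assms unfolding is_lc_density_def by auto

lemma nn_integral_density_lebn_eq_1:
  assumes "prob_space (density (lebn n) (\<lambda>x. ennreal (f x)))" "f \<in> borel_measurable (lebn n)"
  shows "(\<integral>\<^sup>+z. ennreal (f z) \<partial>lebn n) = 1"
proof -
  interpret prob_space "density (lebn n) (\<lambda>x. ennreal (f x))"
    by fact
  have "Rn n \<in> sets (lebn n)"
    by (metis sets.top space_lebn)
  moreover have "emeasure (density (lebn n) (\<lambda>x. ennreal (f x))) (Rn n) = 1"
    using emeasure_space_1 by simp
  ultimately have "(\<integral>\<^sup>+z. ennreal (f z) * indicator (Rn n) z \<partial>lebn n) = 1"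
    using assms(2) by (simp add: emeasure_density)
  moreover have "(\<integral>\<^sup>+z. ennreal (f z) * indicator (Rn n) z \<partial>lebn n) = (\<integral>\<^sup>+z. ennreal (f z) \<partial>lebn n)"
    by (intro nn_integral_cong) simp
  ultimately show ?thesis
    by simp
qed

lemma centered_density_first_moment:
  assumes "centered n (density (lebn n) (\<lambda>x. ennreal (f x)))"
    and "f \<in> borel_measurable (lebn n)" "\<And>z. z \<in> Rn n \<Longrightarrow> 0 \<le> f z" "i < n"
  shows "integrable (lebn n) (\<lambda>z. f z * z i)" "(\<integral>z. f z * z i \<partial>lebn n) = 0"
proof -
  have "i \<in> {..<n}"
    using \<open>i < n\<close> by simp
  then have coord: "(\<lambda>z. z i) \<in> borel_measurable (lebn n)"
    unfolding lebn_def by measurable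
  have nonneg: "AE z in lebn n. 0 \<le> f z"
    using assms(3) by (intro AE_I2) simp
  show "integrable (lebn n) (\<lambda>z. f z * z i)" "(\<integral>z. f z * z i \<partial>lebn n) = 0"
    using assms(1,4) integrable_density[OF coord assms(2) nonneg] integral_density[OF coord assms(2) nonneg]
    by (auto simp: centered_def)
qed

lemma log_concave_fun_ln:
  assumes "log_concave_fun n f" "a \<in> Rn n" "b \<in> Rn n" "0 < f a" "0 < f b" "0 < l" "l < 1"
  shows "0 < f (vcomb n l a (1 - l) b)"
    and "l * ln (f a) + (1 - l) * ln (f b) \<le> ln (f (vcomb n l a (1 - l) b))"
proof -
  have mean: "0 < f a powr l * f b powr (1 - l)"
    using assms(4,5) by simp
  also have "\<dots> \<le> f (vcomb n l a (1 - l) b)"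
    using log_concave_funD assms(1-3,6,7) .
  finally show "0 < f (vcomb n l a (1 - l) b)" .
  have "ln (f a powr l * f b powr (1 - l)) \<le> ln (f (vcomb n l a (1 - l) b))"
    using mean log_concave_funD[OF assms(1-3,6,7)] by (subst ln_le_cancel_iff) auto
  then show "l * ln (f a) + (1 - l) * ln (f b) \<le> ln (f (vcomb n l a (1 - l) b))"
    using assms(4,5) by (simp add: ln_mult ln_powr)
qed

lemma log_concave_support_convex:
  assumes "log_concave_fun n f"
  shows "convex_Rn n {z \<in> Rn n. 0 < f z}"
  using log_concave_fun_ln(1)[OF assms] unfolding convex_Rn_def by auto

lemma centered_lc_support_not_in_halfspace:
  assumes lcm: "log_concave_measure n M" and cen: "centered n M" and den: "is_lc_density n M f"
    and v: "\<exists>i<n. v i \<noteq> 0"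
  shows "\<exists>z\<in>Rn n. 0 < f z \<and> (\<Sum>i<n. v i * z i) < 0"
proof (rule ccontr)
  assume "\<not> ?thesis"
  then have halfspace: "\<And>z. z \<in> Rn n \<Longrightarrow> 0 < f z \<Longrightarrow> 0 \<le> (\<Sum>i<n. v i * z i)"
    by force
  define \<phi> where "\<phi> = (\<lambda>x::nat\<Rightarrow>real. \<Sum>i<n. v i * x i)"
  define H where "H = {x \<in> Rn n. \<phi> x = 0}"
  interpret prob_space M
    using lcm by (simp add: log_concave_measure_def)
  have M: "M = density (lebn n) (\<lambda>x. ennreal (f x))" and f_meas: "f \<in> borel_measurable (lebn n)"
    using is_lc_densityD[OF den] by simp_all
  have coords: "integrable M (\<lambda>x. x i)" "(\<integral>x. x i \<partial>M) = 0" if "i < n" for i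
    using cen that by (auto simp: centered_def)
  have "integrable M \<phi>"
    unfolding \<phi>_def using coords by (intro Bochner_Integration.integrable_sum integrable_mult_right) auto
  moreover have "(\<integral>x. \<phi> x \<partial>M) = 0"
    unfolding \<phi>_def using coords by (subst Bochner_Integration.integral_sum) auto
  moreover have "AE x in M. 0 \<le> \<phi> x"
    unfolding M using f_meas halfspace by (subst AE_density) (auto simp: \<phi>_def intro!: AE_I2)
  ultimately have "AE x in M. \<phi> x = 0"
    using integral_nonneg_eq_0_iff_AE by blast
  then have "AE x in M. x \<in> H"
    by (rule AE_mp) (intro AE_I2, auto simp: H_def M)
  moreover have "H \<in> sets M"
  proof -
    have "\<phi> \<in> borel_measurable (lebn n)"
      unfolding \<phi>_def lebn_def by measurable
    then have "{x \<in> space (lebn n). \<phi> x = 0} \<in> sets (lebn n)"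
      by measurable
    then show ?thesis
      by (simp add: H_def M)
  qed
  ultimately have "measure M H = 1"
    by (simp add: AE_in_set_eq_1)
  moreover have "hyperplane_n n H"
    unfolding hyperplane_n_def H_def \<phi>_def using v by blast
  ultimately show False
    using lcm unfolding log_concave_measure_def by force
qed

lemma log_concave_supergradient:
  assumes lc: "log_concave_fun n f" and f0: "0 < f (vzero n)"
    and axes: "two_sided_axes n {z \<in> Rn n. 0 < f z}"
  shows "\<exists>v. \<forall>z\<in>Rn n. 0 < f z \<longrightarrow> ln (f z) - ln (f (vzero n)) \<le> (\<Sum>i<n. v i * z i)"
proof -
  define E where "E = {(z, t). z \<in> Rn n \<and> 0 < f z \<and> t \<le> ln (f z) - ln (f (vzero n))}"
  have "z \<in> fst ` E" if "z \<in> Rn n" "0 < f z" for z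
    using that by (intro image_eqI[of z fst "(z, ln (f z) - ln (f (vzero n)))"]) (auto simp: E_def)
  then have "fst ` E = {z \<in> Rn n. 0 < f z}"
    by (auto simp: E_def)
  have "\<exists>v. \<forall>(w, t) \<in> E. t \<le> (\<Sum>i<n. v i * w i)"
  proof (rule hypograph_linear_majorant)
    show "fst ` E \<subseteq> Rn n"
      by (auto simp: E_def)
  next
    fix a t b s and l :: real
    assume "(a, t) \<in> E" "(b, s) \<in> E" and l: "0 < l" "l < 1"
    then have a: "a \<in> Rn n" "0 < f a" "t \<le> ln (f a) - ln (f (vzero n))"
      and b: "b \<in> Rn n" "0 < f b" "s \<le> ln (f b) - ln (f (vzero n))"
      by (auto simp: E_def)
    have "l * t + (1 - l) * s \<le>
        l * (ln (f a) - ln (f (vzero n))) + (1 - l) * (ln (f b) - ln (f (vzero n)))"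
      using a b l by (intro add_mono mult_left_mono) auto
    also have "\<dots> \<le> ln (f (vcomb n l a (1 - l) b)) - ln (f (vzero n))"
      using log_concave_fun_ln(2)[OF lc a(1) b(1) a(2) b(2) l] by (simp add: algebra_simps)
    finally show "(vcomb n l a (1 - l) b, l * t + (1 - l) * s) \<in> E"
      using log_concave_fun_ln(1)[OF lc a(1) b(1) a(2) b(2) l] by (simp add: E_def)
  next
    show "\<And>t. (vzero n, t) \<in> E \<Longrightarrow> t \<le> 0"
      by (simp add: E_def)
  qed (use axes \<open>fst ` E = _\<close> in simp)
  then show ?thesis
    by (auto simp: E_def)
qed

lemma centered_lc_density_supergradient:
  assumes "log_concave_measure n M" "centered n M" "is_lc_density n M f" "0 < f (vzero n)"
  shows "\<exists>v. \<forall>z\<in>Rn n. 0 < f z \<longrightarrow> ln (f z) - ln (f (vzero n)) \<le> (\<Sum>i<n. v i * z i)"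
proof -
  have lc: "log_concave_fun n f"
    using is_lc_densityD(2)[OF assms(3)] .
  have "two_sided_axes n {z \<in> Rn n. 0 < f z}"
    using convex_Rn_halfspace_or_two_sided_axes[of "{z \<in> Rn n. 0 < f z}" n]
      log_concave_support_convex[OF lc] assms(4) centered_lc_support_not_in_halfspace[OF assms(1-3)]
    by force
  then show ?thesis
    using log_concave_supergradient[OF lc assms(4)] by blast
qed

section \<open>A Fradelizi-type bound\<close>

lemma integral_lebn_vcomb:
  assumes f_meas: "f \<in> borel_measurable (lebn n)" and nonneg: "\<And>z. z \<in> Rn n \<Longrightarrow> 0 \<le> f z"
    and one: "(\<integral>\<^sup>+z. ennreal (f z) \<partial>lebn n) = 1" and l: "0 < l"
  shows "integrable (lebn n) (\<lambda>z. f (vcomb n l z b y))"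
    and "(\<integral>z. f (vcomb n l z b y) \<partial>lebn n) = 1 / l ^ n"
proof -
  have "(\<lambda>z. vcomb n l z b y) \<in> measurable (lebn n) (lebn n)"
    unfolding vcomb_def lebn_def by measurable
  from measurable_comp[OF this f_meas]
  have meas: "(\<lambda>z. f (vcomb n l z b y)) \<in> borel_measurable (lebn n)"
    unfolding comp_def .
  have "(\<integral>\<^sup>+z. ennreal (f (vcomb n l z b y)) \<partial>lebn n) = ennreal (1 / l ^ n)"
    using nn_integral_lebn_affine[OF l, of "\<lambda>w. ennreal (f w)" n "\<lambda>i. b * y i"] f_meas one
    by (simp add: vcomb_def)
  moreover have "AE z in lebn n. 0 \<le> f (vcomb n l z b y)"
    by (intro AE_I2) (simp add: nonneg)
  ultimately show "integrable (lebn n) (\<lambda>z. f (vcomb n l z b y))"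
    and "(\<integral>z. f (vcomb n l z b y) \<partial>lebn n) = 1 / l ^ n"
    using meas l by (auto intro: integrableI_nonneg simp: integral_eq_nn_integral)
qed

text \<open>Integrated over \<open>z\<close> with \<open>u = f z\<close>, \<open>w = f y\<close>, \<open>c = f 0\<close> and \<open>L\<close> the value
  at \<open>z\<close> of a linear majorant of \<open>ln (f z) - ln (f 0)\<close>, the left side becomes
  \<open>ln (f y / f 0)\<close> and the right side involves the geometric mean
  \<open>f z powr (1 - e) * f y powr e\<close>.\<close>

lemma mult_ln_ratio_le:
  fixes u w c e L :: real
  assumes u: "0 \<le> u" and w: "0 < w" and c: "0 < c" and e: "0 < e"
    and L: "0 < u \<Longrightarrow> ln u - ln c \<le> L"
  shows "u * ln (w / c) \<le> (u powr (1 - e) * w powr e - u) / e + L * u"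
proof (cases "u = 0")
  case False
  then have u: "0 < u"
    using u by simp
  define \<rho> where "\<rho> = w / u"
  have \<rho>: "0 < \<rho>"
    using w u by (simp add: \<rho>_def)
  have "e * ln \<rho> \<le> \<rho> powr e - 1"
    using ln_le_minus_one[of "\<rho> powr e"] \<rho> by (simp add: ln_powr)
  then have "ln \<rho> \<le> (\<rho> powr e - 1) / e"
    using e by (simp add: field_simps)
  moreover have "ln (w / c) = ln \<rho> + (ln u - ln c)"
    using w u c by (simp add: \<rho>_def ln_div)
  ultimately have "u * ln (w / c) \<le> u * ((\<rho> powr e - 1) / e + L)"
    using L u by (intro mult_left_mono) auto
  also have "\<dots> = (u * \<rho> powr e - u) / e + L * u"
    using e by (simp add: field_simps)
  also have "u * \<rho> powr e = u powr (1 - e) * w powr e"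
    using u w by (simp add: \<rho>_def powr_divide powr_diff)
  finally show ?thesis .
qed simp

lemma lc_density_normalized:
  assumes "log_concave_measure n M" "is_lc_density n M f"
  shows "(\<integral>\<^sup>+z. ennreal (f z) \<partial>lebn n) = 1" "integrable (lebn n) f" "(\<integral>z. f z \<partial>lebn n) = 1"
proof -
  have f_meas: "f \<in> borel_measurable (lebn n)" and M: "M = density (lebn n) (\<lambda>x. ennreal (f x))"
    using is_lc_densityD[OF assms(2)] by auto
  have f_ae: "AE z in lebn n. 0 \<le> f z"
    using log_concave_fun_nonneg[OF is_lc_densityD(2)[OF assms(2)]] by (intro AE_I2) simp
  show one: "(\<integral>\<^sup>+z. ennreal (f z) \<partial>lebn n) = 1"
    using assms(1) nn_integral_density_lebn_eq_1[OF _ f_meas] by (simp add: log_concave_measure_def M)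
  show "integrable (lebn n) f"
    using one f_ae f_meas by (intro integrableI_nonneg) auto
  show "(\<integral>z. f z \<partial>lebn n) = 1"
    using one f_ae f_meas by (simp add: integral_eq_nn_integral)
qed

lemma log_concave_geometric_mean_integral:
  assumes lc: "log_concave_fun n f" and f_meas [measurable]: "f \<in> borel_measurable (lebn n)"
    and one: "(\<integral>\<^sup>+z. ennreal (f z) \<partial>lebn n) = 1" and y: "y \<in> Rn n" and l: "0 < l" "l < 1"
  shows "integrable (lebn n) (\<lambda>z. f z powr l * f y powr (1 - l))"
    and "(\<integral>z. f z powr l * f y powr (1 - l) \<partial>lebn n) \<le> 1 / l ^ n"
proof -
  have le: "f z powr l * f y powr (1 - l) \<le> f (vcomb n l z (1 - l) y)" if "z \<in> Rn n" for z
    using log_concave_funD[OF lc that y l] .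
  note comb = integral_lebn_vcomb[OF f_meas log_concave_fun_nonneg[OF lc] one l(1), of "1 - l" y]
  show int: "integrable (lebn n) (\<lambda>z. f z powr l * f y powr (1 - l))"
    by (rule Bochner_Integration.integrable_bound[OF comb(1)])
      (use le log_concave_fun_nonneg[OF lc vcomb_in_Rn] in auto)
  show "(\<integral>z. f z powr l * f y powr (1 - l) \<partial>lebn n) \<le> 1 / l ^ n"
    using integral_mono[OF int comb(1)] le comb(2) by simp
qed

lemma centered_lc_density_ln_ratio_le:
  assumes lcm: "log_concave_measure n M" and cen: "centered n M" and den: "is_lc_density n M f"
    and f0: "0 < f (vzero n)" and y: "y \<in> Rn n" "0 < f y" and l: "0 < l" "l < 1"
  shows "ln (f y / f (vzero n)) \<le> (1 / l ^ n - 1) / (1 - l)"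
proof -
  have f_meas: "f \<in> borel_measurable (lebn n)" and lc: "log_concave_fun n f"
    and M: "M = density (lebn n) (\<lambda>x. ennreal (f x))"
    using is_lc_densityD[OF den] by auto
  note nonneg = log_concave_fun_nonneg[OF lc]
  note normalized = lc_density_normalized[OF lcm den]
  note moment = centered_density_first_moment[OF cen[unfolded M] f_meas nonneg]
  obtain v where v: "\<And>z. z \<in> Rn n \<Longrightarrow> 0 < f z \<Longrightarrow> ln (f z) - ln (f (vzero n)) \<le> (\<Sum>i<n. v i * z i)"
    using centered_lc_density_supergradient[OF lcm cen den f0] by blast
  define g where "g = (\<lambda>z. f z powr l * f y powr (1 - l))"
  note mean = log_concave_geometric_mean_integral[OF lc f_meas normalized(1) y(1) l, folded g_def]
  define R where "R z = (g z - f z) / (1 - l) + (\<Sum>i<n. v i * (f z * z i))" for z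
  have int_parts: "integrable (lebn n) (\<lambda>z. (g z - f z) / (1 - l))"
      "integrable (lebn n) (\<lambda>z. \<Sum>i<n. v i * (f z * z i))"
    using mean(1) normalized(2) moment(1) by (auto intro!: integrable_mult_right)
  have "(\<integral>z. R z \<partial>lebn n) =
      (\<integral>z. (g z - f z) / (1 - l) \<partial>lebn n) + (\<integral>z. (\<Sum>i<n. v i * (f z * z i)) \<partial>lebn n)"
    unfolding R_def using int_parts by (rule Bochner_Integration.integral_add)
  also have "\<dots> = ((\<integral>z. g z \<partial>lebn n) - 1) / (1 - l)"
    using mean(1) normalized(2,3) moment by (subst Bochner_Integration.integral_sum) auto
  finally have integral_R: "(\<integral>z. R z \<partial>lebn n) = ((\<integral>z. g z \<partial>lebn n) - 1) / (1 - l)" .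
  have "f z * ln (f y / f (vzero n)) \<le> R z" if "z \<in> Rn n" for z
  proof -
    have "f z * ln (f y / f (vzero n)) \<le>
        (f z powr (1 - (1 - l)) * f y powr (1 - l) - f z) / (1 - l) + (\<Sum>i<n. v i * z i) * f z"
      using l by (intro mult_ln_ratio_le nonneg that y(2) f0 v) auto
    also have "\<dots> = R z"
      by (simp add: R_def g_def sum_distrib_left sum_distrib_right algebra_simps)
    finally show ?thesis .
  qed
  then have "(\<integral>z. f z * ln (f y / f (vzero n)) \<partial>lebn n) \<le> (\<integral>z. R z \<partial>lebn n)"
    using normalized(2) int_parts unfolding R_def by (intro integral_mono) auto
  then have "ln (f y / f (vzero n)) \<le> ((\<integral>z. g z \<partial>lebn n) - 1) / (1 - l)"
    using normalized(3) integral_R by simp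
  also have "\<dots> \<le> (1 / l ^ n - 1) / (1 - l)"
    using mean(2) l by (intro divide_right_mono) auto
  finally show ?thesis .
qed

lemma centered_lc_density_le_exp:
  assumes n: "0 < n" and lcm: "log_concave_measure n M" and cen: "centered n M"
    and den: "is_lc_density n M f" and f0: "0 < f (vzero n)" and y: "y \<in> Rn n"
  shows "f y \<le> exp (4 * real n) * f (vzero n)"
proof (cases "f y = 0")
  case False
  then have fy: "0 < f y"
    using log_concave_fun_nonneg[OF is_lc_densityD(2)[OF den] y] by simp
  define l where "l = real n / (real n + 1)"
  have l: "0 < l" "l < 1"
    using n by (auto simp: l_def)
  have "1 / l ^ n = (1 + 1 / real n) ^ n"
    using n by (simp add: l_def field_simps power_divide)
  also have "\<dots> \<le> exp 1"
    by (rule exp_ge_one_plus_x_over_n_power_n) (use n in auto)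
  also have "\<dots> \<le> 3"
    by (rule exp_le)
  finally have "1 / l ^ n \<le> 3" .
  have "1 - l = 1 / (real n + 1)"
    by (simp add: l_def field_simps)
  then have "(1 / l ^ n - 1) / (1 - l) = (1 / l ^ n - 1) * (real n + 1)"
    by simp
  also have "\<dots> \<le> 2 * (real n + 1)"
    using \<open>1 / l ^ n \<le> 3\<close> by (intro mult_right_mono) auto
  finally have "(1 / l ^ n - 1) / (1 - l) \<le> 2 * (real n + 1)" .
  then have "ln (f y / f (vzero n)) \<le> 2 * (real n + 1)"
    using centered_lc_density_ln_ratio_le[OF lcm cen den f0 y fy l] by (rule order_trans[rotated])
  also have "\<dots> \<le> 4 * real n"
    using n by simp
  finally have "ln (f y / f (vzero n)) \<le> 4 * real n" .
  then have "f y / f (vzero n) \<le> exp (4 * real n)"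
    using fy f0 by (metis divide_pos_pos exp_le_cancel_iff exp_ln)
  then show ?thesis
    using f0 by (simp add: field_simps)
qed (use f0 in simp)

section \<open>Decay along rays and Ball's body\<close>

lemma log_concave_ray_tail:
  assumes lc: "log_concave_fun n f" and f0: "0 < f (vzero n)"
    and c: "0 < c" "c < r" and small: "f (vscale n c x) \<le> exp (- s) * f (vzero n)"
  shows "f (vscale n r x) \<le> f (vzero n) * exp (- (s / c) * r)"
proof (cases "f (vscale n r x) = 0")
  case False
  then have fr: "0 < f (vscale n r x)"
    using log_concave_fun_nonneg[OF lc vscale_in_Rn] by (simp add: less_le)
  define l where "l = c / r"
  have l: "0 < l" "l < 1"
    using c by (auto simp: l_def)
  have "vcomb n l (vscale n r x) (1 - l) (vzero n) = vscale n c x"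
    using c by (intro Rn_eqI[OF vcomb_in_Rn vscale_in_Rn]) (auto simp: vcomb_def vscale_def vzero_def l_def)
  note concave = log_concave_fun_ln[OF lc vscale_in_Rn vzero_in_Rn fr f0 l, unfolded this]
  have "ln (f (vscale n c x)) \<le> ln (exp (- s) * f (vzero n))"
    using concave(1) small f0 by (subst ln_le_cancel_iff) auto
  then have "l * (ln (f (vscale n r x)) - ln (f (vzero n))) \<le> - s"
    using concave(2) f0 by (simp add: ln_mult algebra_simps)
  then have "ln (f (vscale n r x)) - ln (f (vzero n)) \<le> - s / l"
    using l by (simp add: field_simps)
  also have "- s / l = - (s / c) * r"
    using c by (simp add: l_def)
  finally have "exp (ln (f (vscale n r x))) \<le> exp (ln (f (vzero n)) - (s / c) * r)"
    by simp
  then show ?thesis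
    using fr f0 by (simp add: exp_diff exp_minus divide_inverse)
qed (use f0 in simp)

lemma log_concave_ray_decay:
  assumes lc: "log_concave_fun n f" and f0: "0 < f (vzero n)"
    and bound: "\<And>y. y \<in> Rn n \<Longrightarrow> f y \<le> B * f (vzero n)"
    and c: "0 < c" and s: "0 \<le> s" and small: "f (vscale n c x) \<le> exp (- s) * f (vzero n)"
  shows "f (vscale n r x) \<le> B * exp s * f (vzero n) * exp (- (s / c) * r)"
proof -
  have "1 \<le> B"
    using bound[OF vzero_in_Rn] f0 by simp
  moreover have "1 \<le> exp s"
    using s by simp
  ultimately have B_exp: "1 \<le> B * exp s"
    using mult_mono[of 1 B 1 "exp s"] by simp
  show ?thesis
  proof (cases "r \<le> c")
    case True
    have "s / c * r \<le> s"
      using True c s by (simp add: field_simps mult_right_mono)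
    then have "1 \<le> exp s * exp (- (s / c) * r)"
      by (simp add: exp_add[symmetric])
    moreover have "0 \<le> B * f (vzero n)"
      using \<open>1 \<le> B\<close> f0 by simp
    ultimately have "B * f (vzero n) \<le> B * exp s * f (vzero n) * exp (- (s / c) * r)"
      using mult_left_mono[of 1 "exp s * exp (- (s / c) * r)" "B * f (vzero n)"] by (simp add: mult_ac)
    then show ?thesis
      by (rule order_trans[OF bound[OF vscale_in_Rn]])
  next
    case False
    then have "f (vscale n r x) \<le> f (vzero n) * exp (- (s / c) * r)"
      by (intro log_concave_ray_tail[OF lc f0 c _ small]) simp
    also have "\<dots> \<le> B * exp s * f (vzero n) * exp (- (s / c) * r)"
      using mult_right_mono[OF B_exp, of "f (vzero n) * exp (- (s / c) * r)"] f0 by (simp add: mult_ac)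
    finally show ?thesis .
  qed
qed

text \<open>\<open>r ^ m * exp (- a * r)\<close> is \<open>fact m / a ^ (m + 1)\<close> times the Erlang density, whose
  integral is 1.\<close>

lemma not_in_Ks_if_ray_decay:
  assumes K: "0 < K" and a: "0 < a"
    and decay: "\<And>r. 0 < r \<Longrightarrow> f (vscale n r x) \<le> K * exp (- a * r)"
    and small: "K * fact m / a ^ (m + 1) < f (vzero n) / (real m + 1)"
  shows "x \<notin> Ks n f (real m + 1)"
proof
  let ?C = "K * fact m / a ^ (m + 1)"
  assume "x \<in> Ks n f (real m + 1)"
  then have "ennreal (f (vzero n) / (real m + 1)) \<le>
      (\<integral>\<^sup>+r. ennreal (indicator {0<..} r * r powr (real m + 1 - 1) * f (vscale n r x)) \<partial>lborel)"
    by (simp add: Ks_def)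
  also have "\<dots> \<le> (\<integral>\<^sup>+r. ennreal ?C * ennreal (erlang_density m a r) \<partial>lborel)"
  proof (intro nn_integral_mono)
    fix r :: real
    show "ennreal (indicator {0<..} r * r powr (real m + 1 - 1) * f (vscale n r x)) \<le>
        ennreal ?C * ennreal (erlang_density m a r)"
    proof (cases "0 < r")
      case True
      have "indicator {0<..} r * r powr (real m + 1 - 1) * f (vscale n r x) = r ^ m * f (vscale n r x)"
        using True by (simp add: powr_realpow)
      also have "\<dots> \<le> r ^ m * (K * exp (- a * r))"
        using decay[OF True] True by (intro mult_left_mono) auto
      also have "\<dots> = ?C * erlang_density m a r"
        using True a by (simp add: erlang_density_def field_simps)
      finally show ?thesis
        using K a by (simp add: ennreal_leI ennreal_mult[symmetric])
    qed simp
  qed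
  also have "\<dots> = ennreal ?C"
    using nn_integral_erlang_ith_moment[OF a, of m 0] by (simp add: nn_integral_cmult)
  finally show False
    using small K a by (simp add: ennreal_le_iff)
qed

lemma fact_le_five_n_power:
  assumes "0 < n"
  shows "fact n * (real n + 1) \<le> (5 * real n) ^ (n + 1)"
proof -
  have "(fact n :: real) \<le> real n ^ n"
    using fact_le_power[of n] by simp
  also have "\<dots> \<le> (5 * real n) ^ n"
    by (intro power_mono) auto
  finally have "fact n \<le> (5 * real n) ^ n" .
  then have "fact n * (real n + 1) \<le> (5 * real n) ^ n * (5 * real n)"
    using assms by (intro mult_mono) auto
  then show ?thesis
    by (simp add: mult.commute)
qed

lemma ray_integral_constant_lt:
  assumes n: "0 < n"
  shows "exp (4 * real n) * exp (5 * real n) * fact n / (5 * real n / exp (- 9)) ^ (n + 1)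
    < 1 / (real n + 1)"
proof -
  have "(5 * real n / exp (- 9)) ^ (n + 1) = (5 * real n) ^ (n + 1) * exp (9 * real n) * exp 9"
    by (simp add: power_divide exp_minus field_simps exp_of_nat_mult[symmetric]
        exp_add[symmetric] algebra_simps)
  moreover have "exp (4 * real n) * exp (5 * real n) = exp (9 * real n)"
    by (simp add: exp_add[symmetric])
  ultimately have "exp (4 * real n) * exp (5 * real n) * fact n / (5 * real n / exp (- 9)) ^ (n + 1)
      = fact n / ((5 * real n) ^ (n + 1) * exp 9)"
    by simp
  also have "\<dots> \<le> fact n / (fact n * (real n + 1) * exp 9)"
    using fact_le_five_n_power[OF n] n by (intro divide_left_mono mult_right_mono) auto
  also have "\<dots> < 1 / (real n + 1)"
    by (simp add: divide_strict_left_mono)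
  finally show ?thesis .
qed

lemma centered_lc_density_scaled_Ks_in_Rt:
  assumes n: "0 < n" and lcm: "log_concave_measure n M" and cen: "centered n M"
    and den: "is_lc_density n M f" and t: "5 * real n \<le> t" and x: "x \<in> Ks n f (real n + 1)"
  shows "vscale n (exp (- 9)) x \<in> Rt n f t"
proof -
  have lc: "log_concave_fun n f"
    using is_lc_densityD(2)[OF den] .
  consider "f (vzero n) = 0" | "0 < f (vzero n)"
    using log_concave_fun_nonneg[OF lc vzero_in_Rn] by linarith
  then show ?thesis
  proof cases
    case 1
    then show ?thesis
      using log_concave_fun_nonneg[OF lc vscale_in_Rn] by (simp add: Rt_def)
  next
    case f0: 2
    show ?thesis
    proof (rule ccontr)
      define c :: real where "c = exp (- 9)"
      define K where "K = exp (4 * real n) * exp (5 * real n) * f (vzero n)"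
      define a where "a = 5 * real n / c"
      assume "vscale n (exp (- 9)) x \<notin> Rt n f t"
      then have "f (vscale n c x) < exp (- t) * f (vzero n)"
        by (simp add: Rt_def c_def)
      also have "\<dots> \<le> exp (- (5 * real n)) * f (vzero n)"
        using t f0 by (intro mult_right_mono) auto
      finally have small: "f (vscale n c x) \<le> exp (- (5 * real n)) * f (vzero n)"
        by simp
      have "f (vscale n r x) \<le> K * exp (- a * r)" for r
        unfolding K_def a_def
        by (rule log_concave_ray_decay[OF lc f0 centered_lc_density_le_exp[OF n lcm cen den f0]
              _ _ small]) (simp_all add: c_def)
      moreover have "K * fact n / a ^ (n + 1) < f (vzero n) / (real n + 1)"
        using mult_strict_left_mono[OF ray_integral_constant_lt[OF n] f0]
        by (simp add: K_def a_def c_def mult_ac)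
      moreover have "0 < K" "0 < a"
        using n f0 by (simp_all add: K_def a_def c_def)
      ultimately have "x \<notin> Ks n f (real n + 1)"
        using not_in_Ks_if_ray_decay by blast
      then show False
        using x by simp
    qed
  qed
qed

theorem lemma4p5:
  shows "\<exists>c0>0. \<forall>n M f t. 0 < n \<and> log_concave_measure n M \<and> centered n M \<and>
           is_lc_density n M f \<and> t \<ge> 5 * real n \<longrightarrow>
           vscale n c0 ` Ks n f (real n + 1) \<subseteq> Rt n f t"
  using centered_lc_density_scaled_Ks_in_Rt by (intro exI[of _ "exp (- 9)"]) auto

end
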